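(* Let $G$ and $H$ be connected graphs such that $G_{SR}$ and $H_{SR}$ are regular and at least one of them is bipartite. Then $$dim_s(G\square H)=\frac{|\partial(G)|\,|\partial(H)|}{2}.$$
   Context: Graphs are finite, simple, undirected; for connected $G$, $d_G$ is the shortest-path distance and $I_G[u,v]$ is the set of vertices lying on some shortest $u$–$v$ path. A vertex $w$ strongly resolves vertices $u,v$ if $v\in I_G[u,w]$ or $u\in I_G[v,w]$. A strong resolving set of $G$ is a set $S\subseteq V(G)$ such that every pair of vertices is strongly resolved by some vertex of $S$; $dim_s(G)$ is the minimum cardinality of such a set. A vertex $u$ is maximally distant from $v$ if $d_G(v,w)\le d_G(u,v)$ for every neighbor $w$ of $u$; distinct $u,v$ are mutually maximally distant if each is maximally distant from the other. The boundary $\partial(G)$ is the set of vertices mutually maximally distant with some vertex. The strong resolving graph $G_{SR}$ has vertex set $\partial(G)$, two vertices adjacent iff they are mutually maximally distant in $G$. $G\square H$ denotes the Cartesian product: vertex set $V(G)\times V(H)$, $(a,b)\sim(c,d)$ iff ($a=c$ and $bd\in E(H)$) or ($b=d$ and $ac\in E(G)$). *)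

theory Defs
  imports Complex_Main
begin

definition graph :: "'a set \<Rightarrow> ('a \<Rightarrow> 'a \<Rightarrow> bool) \<Rightarrow> bool" where
  "graph V E \<longleftrightarrow> finite V \<and> V \<noteq> {} \<and>
     (\<forall>x y. E x y \<longrightarrow> x \<in> V \<and> y \<in> V) \<and>
     (\<forall>x y. E x y \<longrightarrow> E y x) \<and> (\<forall>x. \<not> E x x)"

fun walk_len :: "('a \<Rightarrow> 'a \<Rightarrow> bool) \<Rightarrow> nat \<Rightarrow> 'a \<Rightarrow> 'a \<Rightarrow> bool" where
  "walk_len E 0 u v = (u = v)"
| "walk_len E (Suc n) u v = (\<exists>w. E u w \<and> walk_len E n w v)"

definition connected_graph :: "'a set \<Rightarrow> ('a \<Rightarrow> 'a \<Rightarrow> bool) \<Rightarrow> bool" where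
  "connected_graph V E \<longleftrightarrow> graph V E \<and> (\<forall>u\<in>V. \<forall>v\<in>V. \<exists>n. walk_len E n u v)"

definition gdist :: "('a \<Rightarrow> 'a \<Rightarrow> bool) \<Rightarrow> 'a \<Rightarrow> 'a \<Rightarrow> nat" where
  "gdist E u v = (LEAST n. walk_len E n u v)"

definition interval :: "'a set \<Rightarrow> ('a \<Rightarrow> 'a \<Rightarrow> bool) \<Rightarrow> 'a \<Rightarrow> 'a \<Rightarrow> 'a set" where
  "interval V E u v = {w \<in> V. gdist E u w + gdist E w v = gdist E u v}"

definition strongly_resolves :: "'a set \<Rightarrow> ('a \<Rightarrow> 'a \<Rightarrow> bool) \<Rightarrow> 'a \<Rightarrow> 'a \<Rightarrow> 'a \<Rightarrow> bool" where
  "strongly_resolves V E w u v \<longleftrightarrow> v \<in> interval V E u w \<or> u \<in> interval V E v w"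

definition strong_resolving_set :: "'a set \<Rightarrow> ('a \<Rightarrow> 'a \<Rightarrow> bool) \<Rightarrow> 'a set \<Rightarrow> bool" where
  "strong_resolving_set V E S \<longleftrightarrow> S \<subseteq> V \<and>
     (\<forall>u\<in>V. \<forall>v\<in>V. u \<noteq> v \<longrightarrow> (\<exists>w\<in>S. strongly_resolves V E w u v))"

definition strong_metric_dim :: "'a set \<Rightarrow> ('a \<Rightarrow> 'a \<Rightarrow> bool) \<Rightarrow> nat" where
  "strong_metric_dim V E = (LEAST k. \<exists>S. strong_resolving_set V E S \<and> card S = k)"

definition max_distant :: "('a \<Rightarrow> 'a \<Rightarrow> bool) \<Rightarrow> 'a \<Rightarrow> 'a \<Rightarrow> bool" where
  "max_distant E u v \<longleftrightarrow> (\<forall>w. E u w \<longrightarrow> gdist E v w \<le> gdist E u v)"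

definition mutually_max_distant :: "'a set \<Rightarrow> ('a \<Rightarrow> 'a \<Rightarrow> bool) \<Rightarrow> 'a \<Rightarrow> 'a \<Rightarrow> bool" where
  "mutually_max_distant V E u v \<longleftrightarrow> u \<in> V \<and> v \<in> V \<and> u \<noteq> v \<and>
     max_distant E u v \<and> max_distant E v u"

definition boundary :: "'a set \<Rightarrow> ('a \<Rightarrow> 'a \<Rightarrow> bool) \<Rightarrow> 'a set" where
  "boundary V E = {u \<in> V. \<exists>v\<in>V. mutually_max_distant V E u v}"

text \<open>The strong resolving graph G_SR: vertex set boundary V E, edge relation
  mutually_max_distant V E.\<close>

definition regular_graph :: "'a set \<Rightarrow> ('a \<Rightarrow> 'a \<Rightarrow> bool) \<Rightarrow> bool" where
  "regular_graph V E \<longleftrightarrow> (\<exists>k. \<forall>u\<in>V. card {v \<in> V. E u v} = k)"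

definition bipartite_graph :: "'a set \<Rightarrow> ('a \<Rightarrow> 'a \<Rightarrow> bool) \<Rightarrow> bool" where
  "bipartite_graph V E \<longleftrightarrow> (\<exists>A B. A \<inter> B = {} \<and> A \<union> B = V \<and>
     (\<forall>u\<in>V. \<forall>v\<in>V. E u v \<longrightarrow> (u \<in> A \<and> v \<in> B) \<or> (u \<in> B \<and> v \<in> A)))"

definition SR_regular :: "'a set \<Rightarrow> ('a \<Rightarrow> 'a \<Rightarrow> bool) \<Rightarrow> bool" where
  "SR_regular V E \<longleftrightarrow> regular_graph (boundary V E) (mutually_max_distant V E)"

definition SR_bipartite :: "'a set \<Rightarrow> ('a \<Rightarrow> 'a \<Rightarrow> bool) \<Rightarrow> bool" where
  "SR_bipartite V E \<longleftrightarrow> bipartite_graph (boundary V E) (mutually_max_distant V E)"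

definition cart_edges :: "('a \<Rightarrow> 'a \<Rightarrow> bool) \<Rightarrow> ('b \<Rightarrow> 'b \<Rightarrow> bool) \<Rightarrow> ('a \<times> 'b) \<Rightarrow> ('a \<times> 'b) \<Rightarrow> bool" where
  "cart_edges E1 E2 p q \<longleftrightarrow>
     (fst p = fst q \<and> E2 (snd p) (snd q)) \<or> (snd p = snd q \<and> E1 (fst p) (fst q))"

end

theory Submission
  imports Defs
begin

text \<open>A set strongly resolves a connected graph iff it is a vertex cover of the strong
  resolving graph: every pair \<open>u \<noteq> v\<close> lies between some mutually maximally distant pair
  \<open>x, y\<close>, and a mutually maximally distant pair is strongly resolved only by its own
  endpoints. Distances add in the Cartesian product, so \<open>(G \<box> H)\<^sub>S\<^sub>R\<close> is the direct
  product of \<open>G\<^sub>S\<^sub>R\<close> and \<open>H\<^sub>S\<^sub>R\<close>, a \<open>k\<^sub>G k\<^sub>H\<close>-regular graph on \<open>\<partial>(G) \<times> \<partial>(H)\<close>.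
  Double counting its edges shows that a vertex cover contains at least half of the
  vertices; conversely, if \<open>G\<^sub>S\<^sub>R\<close> is regular and bipartite, its colour classes have equal
  size, and one class times \<open>\<partial>(H)\<close> is a vertex cover of exactly half the size.\<close>

lemma walk_len_append: "walk_len E m u v \<Longrightarrow> walk_len E n v w \<Longrightarrow> walk_len E (m + n) u w"
  by (induction m arbitrary: u) auto

lemma walk_len_sym:
  assumes "\<And>x y. E x y \<Longrightarrow> E y x" and "walk_len E n u v"
  shows "walk_len E n v u"
  using assms(2)
proof (induction n arbitrary: u)
  case (Suc n)
  then obtain w where "E u w" "walk_len E n w v" by auto
  then have "walk_len E n v w" "walk_len E 1 w u" using Suc.IH assms(1) by auto
  then show ?case using walk_len_append[of E n v w 1 u] by simp
qed simp

lemma gdist_le_walk_len: "walk_len E n u v \<Longrightarrow> gdist E u v \<le> n"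
  unfolding gdist_def by (rule Least_le)

lemma walk_len_gdist: "walk_len E n u v \<Longrightarrow> walk_len E (gdist E u v) u v"
  unfolding gdist_def by (rule LeastI)

lemma walk_len_cart_fst: "walk_len EG n g g' \<Longrightarrow> walk_len (cart_edges EG EH) n (g, h) (g', h)"
  by (induction n arbitrary: g) (auto simp: cart_edges_def)

lemma walk_len_cart_snd: "walk_len EH n h h' \<Longrightarrow> walk_len (cart_edges EG EH) n (g, h) (g, h')"
  by (induction n arbitrary: h) (auto simp: cart_edges_def)

lemma strong_metric_dim_eqI:
  assumes "strong_resolving_set V E S"
    and "\<And>S'. strong_resolving_set V E S' \<Longrightarrow> card S \<le> card S'"
  shows "strong_metric_dim V E = card S"
  unfolding strong_metric_dim_def by (rule Least_equality) (use assms in auto)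

lemma card_Sigma_regular:
  assumes "finite W" and "\<And>x y. R x y \<Longrightarrow> y \<in> W"
    and "\<And>x. x \<in> W \<Longrightarrow> card {y. R x y} = k" and "A \<subseteq> W"
  shows "card (SIGMA x:A. {y. R x y}) = card A * k"
proof -
  have "finite A" using assms(1,4) finite_subset by blast
  moreover have "finite {y. R x y}" for x using assms(1,2) finite_subset[of "{y. R x y}" W] by blast
  ultimately have "card (SIGMA x:A. {y. R x y}) = (\<Sum>x\<in>A. card {y. R x y})"
    by simp
  also have "\<dots> = (\<Sum>x\<in>A. k)" using assms(3,4) by (intro sum.cong) auto
  finally show ?thesis by simp
qed

text \<open>Every edge is counted from an endpoint in the cover \<open>C\<close>, hence \<open>k |W| \<le> 2 k |C|\<close>.\<close>

lemma card_le_twice_cover_regular: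
  assumes fin: "finite W" and RW: "\<And>x y. R x y \<Longrightarrow> x \<in> W \<and> y \<in> W"
    and sym: "\<And>x y. R x y \<Longrightarrow> R y x"
    and deg: "\<And>x. x \<in> W \<Longrightarrow> card {y. R x y} = k" and "k > 0"
    and cover: "\<And>x y. R x y \<Longrightarrow> x \<in> C \<or> y \<in> C"
  shows "card W \<le> 2 * card (C \<inter> W)"
proof -
  define D where "D = (SIGMA x:C \<inter> W. {y. R x y})"
  have "finite D" using fin RW finite_subset[of D "W \<times> W"] unfolding D_def by blast
  have "(SIGMA x:W. {y. R x y}) \<subseteq> D \<union> prod.swap ` D"
  proof
    fix p assume "p \<in> (SIGMA x:W. {y. R x y})"
    then obtain x y where p: "p = (x, y)" "R x y" by blast
    then have "(x, y) \<in> D \<or> (y, x) \<in> D" using RW sym cover unfolding D_def by blast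
    then show "p \<in> D \<union> prod.swap ` D" using p(1) by (auto intro: image_eqI[of _ _ "(y, x)"])
  qed
  then have "card (SIGMA x:W. {y. R x y}) \<le> card (D \<union> prod.swap ` D)"
    using \<open>finite D\<close> by (intro card_mono) auto
  also have "\<dots> \<le> card D + card (prod.swap ` D)" by (rule card_Un_le)
  also have "\<dots> \<le> 2 * card D" using card_image_le[OF \<open>finite D\<close>, of prod.swap] by simp
  finally have "card (SIGMA x:W. {y. R x y}) \<le> 2 * card D" .
  moreover have "card (SIGMA x:W. {y. R x y}) = card W * k" "card D = card (C \<inter> W) * k"
    using card_Sigma_regular[of W R k] fin RW deg unfolding D_def by blast+
  ultimately have "card W * k \<le> 2 * (card (C \<inter> W) * k)" by simp
  then show ?thesis using \<open>k > 0\<close> by simp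
qed

lemma card_bipartite_regular:
  assumes fin: "finite W" and RW: "\<And>x y. R x y \<Longrightarrow> x \<in> W \<and> y \<in> W"
    and sym: "\<And>x y. R x y \<Longrightarrow> R y x"
    and deg: "\<And>x. x \<in> W \<Longrightarrow> card {y. R x y} = k" and "k > 0"
    and AB: "A \<inter> B = {}" "A \<union> B = W"
    and cross: "\<forall>u\<in>W. \<forall>v\<in>W. R u v \<longrightarrow> (u \<in> A \<and> v \<in> B) \<or> (u \<in> B \<and> v \<in> A)"
  shows "card W = 2 * card A"
proof -
  have "(SIGMA x:A. {y. R x y}) = prod.swap ` (SIGMA x:B. {y. R x y})"
  proof (intro set_eqI iffI)
    fix p assume "p \<in> (SIGMA x:A. {y. R x y})"
    then obtain x y where "p = (x, y)" "x \<in> A" "R x y" by blast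
    moreover have "y \<in> B" using calculation RW cross AB by blast
    ultimately show "p \<in> prod.swap ` (SIGMA x:B. {y. R x y})"
      using sym by (auto intro: image_eqI[of _ _ "(y, x)"])
  next
    fix p assume "p \<in> prod.swap ` (SIGMA x:B. {y. R x y})"
    then obtain x y where "p = (x, y)" "y \<in> B" "R y x" by auto
    moreover have "x \<in> A" using calculation RW cross AB by blast
    ultimately show "p \<in> (SIGMA x:A. {y. R x y})" using sym by blast
  qed
  moreover have "card (SIGMA x:A. {y. R x y}) = card A * k" "card (SIGMA x:B. {y. R x y}) = card B * k"
    using card_Sigma_regular[of W R k] fin RW deg AB by blast+
  ultimately have "card A * k = card B * k" by (auto simp: card_image)
  then have "card A = card B" using \<open>k > 0\<close> by simp
  moreover have "card W = card A + card B"
    using AB fin card_Un_disjoint[of A B] finite_Un[of A B] by simp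
  ultimately show ?thesis by simp
qed

subsection \<open>Distances in a connected graph\<close>

text \<open>Edges are only required to stay inside \<open>V\<close> when they start there: \<open>cart_edges EG EH\<close>
  also joins pairs outside \<open>VG \<times> VH\<close>, and the product should again be an instance.\<close>

locale connected_simple_graph =
  fixes V :: "'a set" and E :: "'a \<Rightarrow> 'a \<Rightarrow> bool"
  assumes finite_V: "finite V" and V_nonempty: "V \<noteq> {}"
    and edge_closed: "E x y \<Longrightarrow> x \<in> V \<Longrightarrow> y \<in> V"
    and edge_sym: "E x y \<Longrightarrow> E y x" and edge_irrefl: "\<not> E x x"
    and walk_exists: "u \<in> V \<Longrightarrow> v \<in> V \<Longrightarrow> \<exists>n. walk_len E n u v"

lemma connected_simple_graphI: "connected_graph V E \<Longrightarrow> connected_simple_graph V E"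
  unfolding connected_graph_def graph_def connected_simple_graph_def by blast

context connected_simple_graph
begin

lemma gdist_walk:
  assumes "u \<in> V" "v \<in> V"
  shows "walk_len E (gdist E u v) u v"
  using walk_exists[OF assms] by (elim exE) (rule walk_len_gdist)

lemma gdist_sym:
  assumes "u \<in> V" "v \<in> V"
  shows "gdist E u v = gdist E v u"
  using gdist_le_walk_len[OF walk_len_sym[OF edge_sym gdist_walk[OF assms(2,1)]]]
    gdist_le_walk_len[OF walk_len_sym[OF edge_sym gdist_walk[OF assms]]]
  by (rule antisym)

lemma gdist_triangle: "u \<in> V \<Longrightarrow> v \<in> V \<Longrightarrow> w \<in> V \<Longrightarrow> gdist E u w \<le> gdist E u v + gdist E v w"
  using walk_len_append[OF gdist_walk gdist_walk] by (rule gdist_le_walk_len)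

lemma gdist_eq_0_iff: "u \<in> V \<Longrightarrow> v \<in> V \<Longrightarrow> gdist E u v = 0 \<longleftrightarrow> u = v"
  using gdist_walk[of u v] gdist_le_walk_len[of E 0 u u] by auto

lemma gdist_edge: "E u w \<Longrightarrow> gdist E u w = 1"
proof -
  assume "E u w"
  then have "walk_len E 1 u w" by simp
  then have "gdist E u w \<le> 1" "walk_len E (gdist E u w) u w"
    by (rule gdist_le_walk_len, rule walk_len_gdist)
  moreover have "u \<noteq> w" using \<open>E u w\<close> edge_irrefl by blast
  ultimately show ?thesis by (cases "gdist E u w") auto
qed

lemma gdist_Suc_neighbour:
  assumes "u \<in> V" "v \<in> V" "gdist E u v = Suc m"
  obtains w where "E u w" "gdist E w v = m"
proof -
  obtain w where w: "E u w" "walk_len E m w v" using gdist_walk[OF assms(1,2)] assms(3) by auto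
  have "gdist E u v \<le> gdist E u w + gdist E w v"
    using gdist_triangle edge_closed[OF w(1) assms(1)] assms by blast
  then have "gdist E w v = m" using gdist_le_walk_len[OF w(2)] gdist_edge[OF w(1)] assms(3) by simp
  with w(1) show thesis by (rule that)
qed

lemma not_max_distant_self:
  assumes "card V \<ge> 2" and "u \<in> V"
  shows "\<not> max_distant E u u"
proof
  assume md: "max_distant E u u"
  have "\<not> card V \<le> Suc 0" using assms(1) by simp
  then obtain v where "v \<in> V" "v \<noteq> u" using card_le_Suc0_iff_eq[OF finite_V] assms(2) by blast
  then have "gdist E u v \<noteq> 0" using gdist_eq_0_iff assms(2) by simp
  then obtain m where "gdist E u v = Suc m" using not0_implies_Suc by blast
  then obtain w where "E u w" using gdist_Suc_neighbour assms(2) \<open>v \<in> V\<close> by blast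
  then have "gdist E u w \<le> gdist E u u" using md unfolding max_distant_def by blast
  then show False using gdist_edge[OF \<open>E u w\<close>] gdist_eq_0_iff[OF assms(2,2)] by simp
qed

subsection \<open>Strong resolving sets are the vertex covers of the strong resolving graph\<close>

lemma mutually_max_distant_sym: "mutually_max_distant V E x y \<longleftrightarrow> mutually_max_distant V E y x"
  unfolding mutually_max_distant_def by auto

lemma mutually_max_distant_in_boundary:
  "mutually_max_distant V E x y \<Longrightarrow> x \<in> boundary V E \<and> y \<in> boundary V E"
  unfolding boundary_def using mutually_max_distant_sym by (auto simp: mutually_max_distant_def)

lemma finite_boundary: "finite (boundary V E)"
  using finite_V unfolding boundary_def by simp

lemma boundary_subset: "boundary V E \<subseteq> V"
  unfolding boundary_def by blast

text \<open>A shortest path from \<open>x\<close> through \<open>y\<close> to \<open>w \<noteq> y\<close> would continue at a neighbour of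
  \<open>y\<close> farther from \<open>x\<close> than \<open>y\<close> is.\<close>

lemma mutually_max_distant_interval_eq:
  assumes m: "mutually_max_distant V E x y" and "w \<in> V" and "y \<in> interval V E x w"
  shows "w = y"
proof (rule ccontr)
  assume "w \<noteq> y"
  have xy: "x \<in> V" "y \<in> V" "max_distant E y x" using m unfolding mutually_max_distant_def by auto
  then have "gdist E y w \<noteq> 0" using gdist_eq_0_iff \<open>w \<in> V\<close> \<open>w \<noteq> y\<close> by simp
  then obtain m where "gdist E y w = Suc m" using not0_implies_Suc by blast
  then obtain y' where y': "E y y'" "gdist E y' w = m" using gdist_Suc_neighbour xy \<open>w \<in> V\<close> by blast
  have "gdist E x w \<le> gdist E x y' + gdist E y' w"
    using gdist_triangle edge_closed[OF y'(1) xy(2)] xy \<open>w \<in> V\<close> by blast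
  moreover have "gdist E x y + gdist E y w = gdist E x w"
    using assms(3) unfolding interval_def by auto
  moreover have "gdist E x y' \<le> gdist E y x"
    using xy(3) y'(1) unfolding max_distant_def by blast
  moreover have "gdist E y x = gdist E x y" using gdist_sym xy(1,2) by simp
  ultimately show False using \<open>gdist E y w = Suc m\<close> y'(2) by linarith
qed

lemma strong_resolving_set_covers:
  assumes "strong_resolving_set V E S" and m: "mutually_max_distant V E x y"
  shows "x \<in> S \<or> y \<in> S"
proof -
  have "x \<in> V" "y \<in> V" "x \<noteq> y" using m unfolding mutually_max_distant_def by auto
  then obtain w where "w \<in> S" "w \<in> V" "strongly_resolves V E w x y"
    using assms(1) unfolding strong_resolving_set_def by blast
  then have "w = y \<or> w = x"
    using mutually_max_distant_interval_eq[OF m] mutually_max_distant_interval_eq[OF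
          mutually_max_distant_sym[THEN iffD1, OF m]]
    unfolding strongly_resolves_def by blast
  with \<open>w \<in> S\<close> show ?thesis by blast
qed

text \<open>If \<open>y\<close> is as far from \<open>x\<close> as possible subject to a shortest \<open>x\<close>-\<open>y\<close> path
  running through \<open>u\<close> and then \<open>v\<close>, then a neighbour \<open>y'\<close> of \<open>y\<close> farther from \<open>x\<close>
  would still admit such a path.\<close>

lemma max_distant_of_farthest_extension:
  assumes V: "x \<in> V" "y \<in> V" "u \<in> V" "v \<in> V"
    and through: "gdist E x y = gdist E x u + gdist E u v + gdist E v y"
    and farthest: "\<And>y'. y' \<in> V \<Longrightarrow> gdist E x y' = gdist E x u + gdist E u v + gdist E v y'
                     \<Longrightarrow> gdist E x y' \<le> gdist E x y"
  shows "max_distant E y x"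
  unfolding max_distant_def
proof (intro allI impI)
  fix y' assume "E y y'"
  then have y': "y' \<in> V" "gdist E y y' = 1" using edge_closed[OF _ V(2)] gdist_edge by blast+
  have "gdist E x y' \<le> gdist E x y + gdist E y y'"
    "gdist E v y' \<le> gdist E v y + gdist E y y'"
    "gdist E x y' \<le> gdist E x v + gdist E v y'"
    "gdist E x v \<le> gdist E x u + gdist E u v"
    using gdist_triangle V y'(1) by blast+
  then have "gdist E x y' \<le> gdist E x y \<or>
      gdist E x y' = gdist E x u + gdist E u v + gdist E v y'"
    using through y'(2) by linarith
  then have "gdist E x y' \<le> gdist E x y" using farthest[OF y'(1)] by blast
  then show "gdist E x y' \<le> gdist E y x" using gdist_sym[OF V(1,2)] by simp
qed

lemma mutually_max_distant_beyond:
  assumes u: "u \<in> V" and v: "v \<in> V" and "u \<noteq> v"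
  obtains x y where "mutually_max_distant V E x y"
    and "u \<in> interval V E v x" and "v \<in> interval V E u y"
proof -
  let ?d = "gdist E"
  define Q where "Q = {(x, y). x \<in> V \<and> y \<in> V \<and> ?d x y = ?d x u + ?d u v + ?d v y}"
  define f where "f = (\<lambda>(x, y). ?d x y)"
  have "finite Q" using finite_subset[of Q "V \<times> V"] finite_V unfolding Q_def by auto
  moreover have "(u, v) \<in> Q" unfolding Q_def using u v gdist_eq_0_iff by auto
  ultimately have "Max (f ` Q) \<in> f ` Q" by (intro Max_in) auto
  then obtain x y where xy: "(x, y) \<in> Q" "f (x, y) = Max (f ` Q)" by auto
  have max: "f q \<le> f (x, y)" if "q \<in> Q" for q using xy(2) \<open>finite Q\<close> that by simp
  have V: "x \<in> V" "y \<in> V" and through: "?d x y = ?d x u + ?d u v + ?d v y"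
    using xy(1) unfolding Q_def by auto
  have sym_uv: "?d v u = ?d u v" using gdist_sym[OF v u] .
  have "max_distant E y x"
  proof (rule max_distant_of_farthest_extension[OF V u v through])
    show "?d x y' \<le> ?d x y" if "y' \<in> V" "?d x y' = ?d x u + ?d u v + ?d v y'" for y'
      using max[of "(x, y')"] that V(1) unfolding Q_def f_def by simp
  qed
  moreover have "max_distant E x y"
  proof (rule max_distant_of_farthest_extension[OF V(2,1) v u])
    show "?d y x = ?d y v + ?d v u + ?d u x"
      using through sym_uv gdist_sym[OF V(2,1)] gdist_sym[OF V(2) v] gdist_sym[OF u V(1)] by linarith
    show "?d y x' \<le> ?d y x" if x': "x' \<in> V" "?d y x' = ?d y v + ?d v u + ?d u x'" for x'
    proof -
      have "?d x' y = ?d x' u + ?d u v + ?d v y"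
        using x'(2) sym_uv gdist_sym[OF x'(1) V(2)] gdist_sym[OF V(2) v] gdist_sym[OF u x'(1)]
        by linarith
      then have "?d x' y \<le> ?d x y" using max[of "(x', y)"] x'(1) V(2) unfolding Q_def f_def by simp
      then show ?thesis using gdist_sym[OF x'(1) V(2)] gdist_sym[OF V] by linarith
    qed
  qed
  moreover have "x \<noteq> y"
    using through gdist_eq_0_iff[OF u v] gdist_eq_0_iff[OF V] \<open>u \<noteq> v\<close> by auto
  moreover have "?d v u + ?d u x = ?d v x"
    using gdist_triangle[OF V(1) u v] gdist_triangle[OF V(1) v V(2)] through
      sym_uv gdist_sym[OF v V(1)] gdist_sym[OF u V(1)] by linarith
  moreover have "?d u v + ?d v y = ?d u y"
    using gdist_triangle[OF u v V(2)] gdist_triangle[OF V(1) u V(2)] through by linarith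
  ultimately show thesis
    using V u v by (intro that) (auto simp: mutually_max_distant_def interval_def)
qed

lemma strong_resolving_set_of_cover:
  assumes "S \<subseteq> V" and cover: "\<And>x y. mutually_max_distant V E x y \<Longrightarrow> x \<in> S \<or> y \<in> S"
  shows "strong_resolving_set V E S"
  unfolding strong_resolving_set_def
proof (intro conjI ballI impI assms(1))
  fix u v assume "u \<in> V" "v \<in> V" "u \<noteq> v"
  then obtain x y where "mutually_max_distant V E x y" "u \<in> interval V E v x" "v \<in> interval V E u y"
    by (rule mutually_max_distant_beyond)
  then show "\<exists>w\<in>S. strongly_resolves V E w u v"
    using cover unfolding strongly_resolves_def by blast
qed

lemma exists_mutually_max_distant:
  assumes "card V \<ge> 2"
  obtains x y where "mutually_max_distant V E x y"
proof -
  obtain u where "u \<in> V" using V_nonempty by blast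
  moreover have "\<not> card V \<le> Suc 0" using assms by simp
  ultimately obtain v where "v \<in> V" "v \<noteq> u" using card_le_Suc0_iff_eq[OF finite_V] by blast
  then show thesis using mutually_max_distant_beyond[OF \<open>u \<in> V\<close>] that by blast
qed

lemma SR_regular_degree:
  assumes "SR_regular V E" and "card V \<ge> 2"
  obtains k where "k > 0" and "\<And>u. u \<in> boundary V E \<Longrightarrow> card {v. mutually_max_distant V E u v} = k"
proof -
  have neighbours: "{v \<in> boundary V E. mutually_max_distant V E u v} = {v. mutually_max_distant V E u v}"
    for u using mutually_max_distant_in_boundary by blast
  obtain k where "\<forall>u\<in>boundary V E. card {v \<in> boundary V E. mutually_max_distant V E u v} = k"
    using assms(1) unfolding SR_regular_def regular_graph_def by blast
  then have k: "\<And>u. u \<in> boundary V E \<Longrightarrow> card {v. mutually_max_distant V E u v} = k"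
    by (simp add: neighbours)
  obtain u v where uv: "mutually_max_distant V E u v" using exists_mutually_max_distant[OF assms(2)] .
  have "{v. mutually_max_distant V E u v} \<subseteq> V" unfolding mutually_max_distant_def by blast
  then have "finite {v. mutually_max_distant V E u v}" using finite_V by (rule finite_subset)
  then have "card {v. mutually_max_distant V E u v} > 0" using uv by (auto simp: card_gt_0_iff)
  then have "k > 0" using k mutually_max_distant_in_boundary[OF uv] by simp
  then show thesis using k by (rule that)
qed

lemma SR_bipartite_half_cover:
  assumes "SR_bipartite V E" and "k > 0"
    and deg: "\<And>u. u \<in> boundary V E \<Longrightarrow> card {v. mutually_max_distant V E u v} = k"
  obtains X where "X \<subseteq> boundary V E" and "\<And>x y. mutually_max_distant V E x y \<Longrightarrow> x \<in> X \<or> y \<in> X"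
    and "card (boundary V E) = 2 * card X"
proof -
  obtain X Y where XY: "X \<inter> Y = {}" "X \<union> Y = boundary V E"
    and cross: "\<forall>u\<in>boundary V E. \<forall>v\<in>boundary V E. mutually_max_distant V E u v \<longrightarrow>
      (u \<in> X \<and> v \<in> Y) \<or> (u \<in> Y \<and> v \<in> X)"
    using assms(1) unfolding SR_bipartite_def bipartite_graph_def by blast
  show thesis
  proof (rule that)
    show "X \<subseteq> boundary V E" using XY by blast
    show "x \<in> X \<or> y \<in> X" if "mutually_max_distant V E x y" for x y
      using cross mutually_max_distant_in_boundary[OF that] that by blast
    show "card (boundary V E) = 2 * card X"
      using card_bipartite_regular[OF finite_boundary _ _ deg \<open>k > 0\<close> XY cross]
        mutually_max_distant_in_boundary mutually_max_distant_sym by blast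
  qed
qed

end

subsection \<open>The Cartesian product\<close>

locale cartesian_product_graphs =
  G: connected_simple_graph VG EG + H: connected_simple_graph VH EH
  for VG :: "'a set" and EG and VH :: "'b set" and EH
begin

lemma walk_len_cart_gdist:
  assumes "g \<in> VG" "h \<in> VH" "g' \<in> VG" "h' \<in> VH"
  shows "walk_len (cart_edges EG EH) (gdist EG g g' + gdist EH h h') (g, h) (g', h')"
  using walk_len_append[OF walk_len_cart_fst[OF G.gdist_walk[OF assms(1,3)]]
      walk_len_cart_snd[OF H.gdist_walk[OF assms(2,4)]]] .

sublocale P: connected_simple_graph "VG \<times> VH" "cart_edges EG EH"
proof
  show "finite (VG \<times> VH)" "VG \<times> VH \<noteq> {}" using G.finite_V H.finite_V G.V_nonempty H.V_nonempty by auto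
  show "q \<in> VG \<times> VH" if "cart_edges EG EH p q" "p \<in> VG \<times> VH" for p q
    using that G.edge_closed H.edge_closed unfolding cart_edges_def by (auto simp: mem_Times_iff)
  show "cart_edges EG EH q p" if "cart_edges EG EH p q" for p q
    using that G.edge_sym H.edge_sym unfolding cart_edges_def by auto
  show "\<not> cart_edges EG EH p p" for p using G.edge_irrefl H.edge_irrefl unfolding cart_edges_def by auto
  show "\<exists>n. walk_len (cart_edges EG EH) n p q" if pq: "p \<in> VG \<times> VH" "q \<in> VG \<times> VH" for p q
  proof -
    obtain g h g' h' where "p = (g, h)" "q = (g', h')"
      and "g \<in> VG" "h \<in> VH" "g' \<in> VG" "h' \<in> VH" using pq by auto
    then show ?thesis using walk_len_cart_gdist by blast
  qed
qed

lemma gdist_le_walk_len_cart: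
  assumes "walk_len (cart_edges EG EH) n (g, h) (g', h')"
    and "g \<in> VG" "h \<in> VH" "g' \<in> VG" "h' \<in> VH"
  shows "gdist EG g g' + gdist EH h h' \<le> n"
  using assms
proof (induction n arbitrary: g h)
  case 0
  then show ?case using G.gdist_eq_0_iff H.gdist_eq_0_iff by simp
next
  case (Suc n)
  then obtain a b where step: "cart_edges EG EH (g, h) (a, b)"
    and walk: "walk_len (cart_edges EG EH) n (a, b) (g', h')" by auto
  have "a \<in> VG" "b \<in> VH" using P.edge_closed[OF step] Suc.prems by auto
  then have IH: "gdist EG a g' + gdist EH b h' \<le> n" using Suc.IH walk Suc.prems by blast
  from step consider "a = g" "EH h b" | "b = h" "EG g a" unfolding cart_edges_def by auto
  then show ?case
  proof cases
    case 1
    then show ?thesis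
      using IH H.gdist_triangle[OF Suc.prems(3) \<open>b \<in> VH\<close> Suc.prems(5)] H.gdist_edge by simp
  next
    case 2
    then show ?thesis
      using IH G.gdist_triangle[OF Suc.prems(2) \<open>a \<in> VG\<close> Suc.prems(4)] G.gdist_edge by simp
  qed
qed

lemma gdist_cart:
  assumes "g \<in> VG" "h \<in> VH" "g' \<in> VG" "h' \<in> VH"
  shows "gdist (cart_edges EG EH) (g, h) (g', h') = gdist EG g g' + gdist EH h h'"
proof (rule antisym)
  show "gdist (cart_edges EG EH) (g, h) (g', h') \<le> gdist EG g g' + gdist EH h h'"
    using walk_len_cart_gdist[OF assms] by (rule gdist_le_walk_len)
  show "gdist EG g g' + gdist EH h h' \<le> gdist (cart_edges EG EH) (g, h) (g', h')"
    using gdist_le_walk_len_cart[OF P.gdist_walk] assms by simp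
qed

lemma max_distant_cart_iff:
  assumes V: "g \<in> VG" "h \<in> VH" "g' \<in> VG" "h' \<in> VH"
  shows "max_distant (cart_edges EG EH) (g, h) (g', h') \<longleftrightarrow> max_distant EG g g' \<and> max_distant EH h h'"
proof -
  have fst_step: "gdist (cart_edges EG EH) (g', h') (a, h) \<le> gdist (cart_edges EG EH) (g, h) (g', h')
      \<longleftrightarrow> gdist EG g' a \<le> gdist EG g g'" if "EG g a" for a
    using G.edge_closed[OF that V(1)] gdist_cart V H.gdist_sym[OF V(4,2)] by simp
  have snd_step: "gdist (cart_edges EG EH) (g', h') (g, b) \<le> gdist (cart_edges EG EH) (g, h) (g', h')
      \<longleftrightarrow> gdist EH h' b \<le> gdist EH h h'" if "EH h b" for b
    using H.edge_closed[OF that V(2)] gdist_cart V G.gdist_sym[OF V(3,1)] by simp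
  have "max_distant (cart_edges EG EH) (g, h) (g', h') \<longleftrightarrow>
      (\<forall>a. EG g a \<longrightarrow> gdist (cart_edges EG EH) (g', h') (a, h) \<le> gdist (cart_edges EG EH) (g, h) (g', h')) \<and>
      (\<forall>b. EH h b \<longrightarrow> gdist (cart_edges EG EH) (g', h') (g, b) \<le> gdist (cart_edges EG EH) (g, h) (g', h'))"
    unfolding max_distant_def cart_edges_def by (auto simp: split_paired_all)
  also have "\<dots> \<longleftrightarrow> max_distant EG g g' \<and> max_distant EH h h'"
    unfolding max_distant_def by (simp add: fst_step snd_step)
  finally show ?thesis .
qed

lemma mutually_max_distant_cart_iff:
  assumes "card VG \<ge> 2" "card VH \<ge> 2"
  shows "mutually_max_distant (VG \<times> VH) (cart_edges EG EH) p q \<longleftrightarrow>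
    mutually_max_distant VG EG (fst p) (fst q) \<and> mutually_max_distant VH EH (snd p) (snd q)"
proof (cases "p \<in> VG \<times> VH \<and> q \<in> VG \<times> VH")
  case True
  then obtain g h g' h' where pq: "p = (g, h)" "q = (g', h')"
    and V: "g \<in> VG" "h \<in> VH" "g' \<in> VG" "h' \<in> VH" by auto
  have "g = g' \<Longrightarrow> \<not> max_distant EG g g'" "h = h' \<Longrightarrow> \<not> max_distant EH h h'"
    using G.not_max_distant_self[OF assms(1) V(1)] H.not_max_distant_self[OF assms(2) V(2)] by auto
  then show ?thesis
    unfolding mutually_max_distant_def pq
    using max_distant_cart_iff[OF V] max_distant_cart_iff[OF V(3,4,1,2)] V by auto
qed (auto simp: mutually_max_distant_def mem_Times_iff)

lemma boundary_cart:
  assumes "card VG \<ge> 2" "card VH \<ge> 2"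
  shows "boundary (VG \<times> VH) (cart_edges EG EH) = boundary VG EG \<times> boundary VH EH"
proof (intro set_eqI iffI)
  fix p assume "p \<in> boundary (VG \<times> VH) (cart_edges EG EH)"
  then obtain q where "mutually_max_distant (VG \<times> VH) (cart_edges EG EH) p q"
    unfolding boundary_def by blast
  then show "p \<in> boundary VG EG \<times> boundary VH EH"
    using mutually_max_distant_cart_iff[OF assms] G.mutually_max_distant_in_boundary
      H.mutually_max_distant_in_boundary by (auto simp: mem_Times_iff)
next
  fix p assume "p \<in> boundary VG EG \<times> boundary VH EH"
  then obtain g' h' where "mutually_max_distant VG EG (fst p) g'" "mutually_max_distant VH EH (snd p) h'"
    unfolding boundary_def mem_Times_iff by blast
  then have "mutually_max_distant (VG \<times> VH) (cart_edges EG EH) p (g', h')"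
    using mutually_max_distant_cart_iff[OF assms] by simp
  then show "p \<in> boundary (VG \<times> VH) (cart_edges EG EH)"
    using P.mutually_max_distant_in_boundary by blast
qed

lemma card_boundaries_le_twice_strong_resolving_set:
  assumes cG: "card VG \<ge> 2" and cH: "card VH \<ge> 2"
    and "SR_regular VG EG" "SR_regular VH EH"
    and S: "strong_resolving_set (VG \<times> VH) (cart_edges EG EH) S"
  shows "card (boundary VG EG) * card (boundary VH EH) \<le> 2 * card S"
proof -
  let ?W = "boundary VG EG \<times> boundary VH EH"
  let ?R = "mutually_max_distant (VG \<times> VH) (cart_edges EG EH)"
  obtain kG where kG: "kG > 0" "\<And>u. u \<in> boundary VG EG \<Longrightarrow> card {v. mutually_max_distant VG EG u v} = kG"
    by (rule G.SR_regular_degree[OF assms(3) cG]) blast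
  obtain kH where kH: "kH > 0" "\<And>u. u \<in> boundary VH EH \<Longrightarrow> card {v. mutually_max_distant VH EH u v} = kH"
    by (rule H.SR_regular_degree[OF assms(4) cH]) blast
  have "card ?W \<le> 2 * card (S \<inter> ?W)"
  proof (rule card_le_twice_cover_regular[where R = ?R])
    show "finite ?W" using G.finite_boundary H.finite_boundary by simp
    show "p \<in> ?W \<and> q \<in> ?W" if "?R p q" for p q
      using P.mutually_max_distant_in_boundary[OF that] boundary_cart[OF cG cH] by simp
    show "?R q p" if "?R p q" for p q using that P.mutually_max_distant_sym by blast
    show "card {q. ?R p q} = kG * kH" if "p \<in> ?W" for p
    proof -
      have "{q. ?R p q} = {g. mutually_max_distant VG EG (fst p) g} \<times> {h. mutually_max_distant VH EH (snd p) h}"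
        using mutually_max_distant_cart_iff[OF cG cH] by auto
      then show ?thesis using that kG(2) kH(2) by (auto simp: card_cartesian_product)
    qed
    show "kG * kH > 0" using kG(1) kH(1) by simp
    show "p \<in> S \<or> q \<in> S" if "?R p q" for p q using P.strong_resolving_set_covers[OF S that] .
  qed
  moreover have "finite S" using S P.finite_V finite_subset unfolding strong_resolving_set_def by blast
  then have "card (S \<inter> ?W) \<le> card S" by (simp add: card_mono)
  ultimately show ?thesis by (simp add: card_cartesian_product)
qed

lemma strong_resolving_set_cart_of_fst_cover:
  assumes cG: "card VG \<ge> 2" and cH: "card VH \<ge> 2" and "X \<subseteq> VG"
    and cover: "\<And>x y. mutually_max_distant VG EG x y \<Longrightarrow> x \<in> X \<or> y \<in> X"
  shows "strong_resolving_set (VG \<times> VH) (cart_edges EG EH) (X \<times> boundary VH EH)"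
proof (rule P.strong_resolving_set_of_cover)
  show "X \<times> boundary VH EH \<subseteq> VG \<times> VH" using assms(3) H.boundary_subset by blast
  show "p \<in> X \<times> boundary VH EH \<or> q \<in> X \<times> boundary VH EH"
    if "mutually_max_distant (VG \<times> VH) (cart_edges EG EH) p q" for p q
  proof -
    have "mutually_max_distant VG EG (fst p) (fst q)" "mutually_max_distant VH EH (snd p) (snd q)"
      using that mutually_max_distant_cart_iff[OF cG cH] by simp_all
    then show ?thesis using cover H.mutually_max_distant_in_boundary by (auto simp: mem_Times_iff)
  qed
qed

lemma strong_resolving_set_cart_of_snd_cover:
  assumes cG: "card VG \<ge> 2" and cH: "card VH \<ge> 2" and "Y \<subseteq> VH"
    and cover: "\<And>x y. mutually_max_distant VH EH x y \<Longrightarrow> x \<in> Y \<or> y \<in> Y"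
  shows "strong_resolving_set (VG \<times> VH) (cart_edges EG EH) (boundary VG EG \<times> Y)"
proof (rule P.strong_resolving_set_of_cover)
  show "boundary VG EG \<times> Y \<subseteq> VG \<times> VH" using assms(3) G.boundary_subset by blast
  show "p \<in> boundary VG EG \<times> Y \<or> q \<in> boundary VG EG \<times> Y"
    if "mutually_max_distant (VG \<times> VH) (cart_edges EG EH) p q" for p q
  proof -
    have "mutually_max_distant VG EG (fst p) (fst q)" "mutually_max_distant VH EH (snd p) (snd q)"
      using that mutually_max_distant_cart_iff[OF cG cH] by simp_all
    then show ?thesis using cover G.mutually_max_distant_in_boundary by (auto simp: mem_Times_iff)
  qed
qed

lemma twice_strong_metric_dim_cart:
  assumes cG: "card VG \<ge> 2" and cH: "card VH \<ge> 2"
    and rG: "SR_regular VG EG" and rH: "SR_regular VH EH"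
    and "SR_bipartite VG EG \<or> SR_bipartite VH EH"
  shows "2 * strong_metric_dim (VG \<times> VH) (cart_edges EG EH) = card (boundary VG EG) * card (boundary VH EH)"
proof -
  obtain C where C: "strong_resolving_set (VG \<times> VH) (cart_edges EG EH) C"
    and card_C: "2 * card C = card (boundary VG EG) * card (boundary VH EH)"
  proof (cases "SR_bipartite VG EG")
    case True
    obtain k where "k > 0" "\<And>u. u \<in> boundary VG EG \<Longrightarrow> card {v. mutually_max_distant VG EG u v} = k"
      by (rule G.SR_regular_degree[OF rG cG]) blast
    then obtain X where "X \<subseteq> boundary VG EG" "\<And>x y. mutually_max_distant VG EG x y \<Longrightarrow> x \<in> X \<or> y \<in> X"
      and "card (boundary VG EG) = 2 * card X"
      using G.SR_bipartite_half_cover[OF True] by blast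
    then show thesis
      using that[of "X \<times> boundary VH EH"] strong_resolving_set_cart_of_fst_cover[OF cG cH] G.boundary_subset
      by (simp add: card_cartesian_product)
  next
    case False
    then have "SR_bipartite VH EH" using assms(5) by blast
    obtain k where "k > 0" "\<And>u. u \<in> boundary VH EH \<Longrightarrow> card {v. mutually_max_distant VH EH u v} = k"
      by (rule H.SR_regular_degree[OF rH cH]) blast
    then obtain Y where "Y \<subseteq> boundary VH EH" "\<And>x y. mutually_max_distant VH EH x y \<Longrightarrow> x \<in> Y \<or> y \<in> Y"
      and "card (boundary VH EH) = 2 * card Y"
      using H.SR_bipartite_half_cover[OF \<open>SR_bipartite VH EH\<close>] by blast
    then show thesis
      using that[of "boundary VG EG \<times> Y"] strong_resolving_set_cart_of_snd_cover[OF cG cH] H.boundary_subset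
      by (simp add: card_cartesian_product)
  qed
  have "strong_metric_dim (VG \<times> VH) (cart_edges EG EH) = card C"
  proof (rule strong_metric_dim_eqI[OF C])
    fix S assume "strong_resolving_set (VG \<times> VH) (cart_edges EG EH) S"
    then have "2 * card C \<le> 2 * card S"
      using card_C card_boundaries_le_twice_strong_resolving_set[OF cG cH rG rH] by simp
    then show "card C \<le> card S" by simp
  qed
  with card_C show ?thesis by simp
qed

end

theorem theorem10:
  fixes VG :: "'a set" and EG :: "'a \<Rightarrow> 'a \<Rightarrow> bool"
    and VH :: "'b set" and EH :: "'b \<Rightarrow> 'b \<Rightarrow> bool"
  assumes "connected_graph VG EG" and "connected_graph VH EH"
    and "card VG \<ge> 2" and "card VH \<ge> 2"
    and "SR_regular VG EG" and "SR_regular VH EH"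
    and "SR_bipartite VG EG \<or> SR_bipartite VH EH"
  shows "real (strong_metric_dim (VG \<times> VH) (cart_edges EG EH))
           = real (card (boundary VG EG)) * real (card (boundary VH EH)) / 2"
proof -
  interpret cartesian_product_graphs VG EG VH EH
    using connected_simple_graphI[OF assms(1)] connected_simple_graphI[OF assms(2)]
    by (rule cartesian_product_graphs.intro)
  have "2 * strong_metric_dim (VG \<times> VH) (cart_edges EG EH) = card (boundary VG EG) * card (boundary VH EH)"
    using twice_strong_metric_dim_cart assms(3-7) by blast
  then show ?thesis by (simp add: field_simps flip: of_nat_mult)
qed

end
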